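(* In the setting below, for any epoch $t$ and all honest nodes $k\in\mathcal{G}$: (a) $\|\mu_t^{(k)}-\nabla f(\tilde{x}_{t-1})\|\le\mathcal{V}$; (b) $\|\mu_t^{(k)}-\mu_t^{\mathrm{med}}\|\le4\mathcal{V}$ and $\|\mu_t^{\mathrm{med}}-\nabla f(\tilde{x}_{t-1})\|\le3\mathcal{V}$.
   Context: Setting: $f(x)=\mathbb{E}_{\xi\sim\mathcal{D}}f(x;\xi)$ with $\|\nabla f(x;\xi)-\nabla f(x)\|\le\mathcal{V}$ for all $x$ and all $\xi\sim\mathcal{D}$. There are $K$ worker nodes; the honest set $\mathcal{G}$ satisfies $|\mathcal{G}|\ge(1-\alpha)K$ with $\alpha\in[0,1/2)$, others Byzantine. At epoch $t$, each $k\in\mathcal{G}$ sends $\mu_t^{(k)}=\frac{1}{B_t}\sum_{i=1}^{B_t}\nabla f(\tilde{x}_{t-1};\xi_{t,i}^{(k)})$ with $\xi_{t,i}^{(k)}\sim\mathcal{D}$; each Byzantine node sends an arbitrary vector. Here $\mu_t^{\mathrm{med}}$ is defined (as in the fallback rule of the algorithm) as $\mu_t^{(k)}$ for any node $k$ such that $|\{k'\in[K]:\|\mu_t^{(k')}-\mu_t^{(k)}\|\le2\mathcal{V}\}|>K/2$. *)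

theory Defs
  imports "HOL-Probability.Probability"
begin

text \<open>Node m (among nodes 0..K-1) is an admissible choice for mu_med:
  more than K/2 nodes k' satisfy norm (mu k' - mu m) \<le> 2V.\<close>
definition is_med_node :: "(nat \<Rightarrow> 'a::real_normed_vector) \<Rightarrow> nat \<Rightarrow> real \<Rightarrow> nat \<Rightarrow> bool" where
  "is_med_node mu K V m \<longleftrightarrow>
     m < K \<and> real (card {k'. k' < K \<and> norm (mu k' - mu m) \<le> 2 * V}) > real K / 2"

end

theory Submission
  imports Defs
begin

text \<open>Averaging preserves the bound, so every honest vector lies within V of the true gradient
  and any two honest vectors within 2V of each other. Honest nodes form a strict majority, so each
  honest node is an admissible median node. Conversely the 2V-neighbourhood of an admissible median
  node is also a strict majority, hence meets the honest nodes; the triangle inequality through such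
  an honest node gives the bounds 4V and 3V.\<close>

lemma norm_average_diff_le:
  fixes f :: "'i \<Rightarrow> 'a::real_normed_vector"
  assumes "finite A" "A \<noteq> {}" "\<And>i. i \<in> A \<Longrightarrow> norm (f i - g) \<le> V"
  shows "norm ((1 / real (card A)) *\<^sub>R (\<Sum>i\<in>A. f i) - g) \<le> V"
proof -
  have card_pos: "real (card A) > 0"
    using assms(1,2) by (simp add: card_gt_0_iff)
  have "(1 / real (card A)) *\<^sub>R (\<Sum>i\<in>A. f i) - g = (1 / real (card A)) *\<^sub>R (\<Sum>i\<in>A. f i - g)"
    using card_pos by (simp add: sum_subtractf scaleR_diff_right sum_constant_scaleR)
  also have "norm \<dots> \<le> (1 / real (card A)) * (\<Sum>i\<in>A. norm (f i - g))"
    using card_pos by (simp add: divide_right_mono norm_sum)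
  also have "\<dots> \<le> (1 / real (card A)) * (\<Sum>i\<in>A. V)"
    by (intro mult_left_mono sum_mono assms(3)) auto
  also have "\<dots> = V"
    using card_pos by simp
  finally show ?thesis .
qed

lemma norm_diff_le_twice:
  fixes x y g :: "'a::real_normed_vector"
  assumes "norm (x - g) \<le> V" "norm (y - g) \<le> V"
  shows "norm (x - y) \<le> 2 * V"
  using norm_diff_triangle_le[of x g V y V] assms by (simp add: norm_minus_commute)

lemma majorities_Int_nonempty:
  assumes "A \<subseteq> {..<K}" "B \<subseteq> {..<K}"
    and "real (card A) > real K / 2" "real (card B) > real K / 2"
  shows "A \<inter> B \<noteq> {}"
proof
  assume "A \<inter> B = {}"
  moreover have "finite A" "finite B"
    using assms(1,2) finite_subset by auto
  ultimately have "card A + card B = card (A \<union> B)"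
    by (simp add: card_Un_disjoint)
  also have "\<dots> \<le> K"
    using assms(1,2) card_mono[of "{..<K}" "A \<union> B"] by auto
  finally show False
    using assms(3,4) by linarith
qed

lemma is_med_node_if_honest:
  assumes G: "G \<subseteq> {..<K}" "real (card G) > real K / 2"
    and honest_close: "\<And>j. j \<in> G \<Longrightarrow> norm (mu j - g) \<le> V"
    and "k \<in> G"
  shows "is_med_node mu K V k"
proof -
  have "G \<subseteq> {k'. k' < K \<and> norm (mu k' - mu k) \<le> 2 * V}"
    using G(1) honest_close \<open>k \<in> G\<close> by (auto intro: norm_diff_le_twice)
  then have "card G \<le> card {k'. k' < K \<and> norm (mu k' - mu k) \<le> 2 * V}"
    by (intro card_mono) auto
  then show ?thesis
    using G \<open>k \<in> G\<close> unfolding is_med_node_def by auto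
qed

lemma is_med_node_close_to_honest:
  fixes mu :: "nat \<Rightarrow> 'a::real_normed_vector"
  assumes G: "G \<subseteq> {..<K}" "real (card G) > real K / 2"
    and honest_close: "\<And>j. j \<in> G \<Longrightarrow> norm (mu j - g) \<le> V"
    and "k \<in> G" "is_med_node mu K V m"
  shows "norm (mu k - mu m) \<le> 4 * V" "norm (mu m - g) \<le> 3 * V"
proof -
  have "{k'. k' < K \<and> norm (mu k' - mu m) \<le> 2 * V} \<inter> G \<noteq> {}"
    using assms(5) G unfolding is_med_node_def by (intro majorities_Int_nonempty[of _ K]) auto
  then obtain j where "j \<in> G" and j_close: "norm (mu j - mu m) \<le> 2 * V"
    by auto
  have "norm (mu k - mu j) \<le> 2 * V"
    using honest_close \<open>k \<in> G\<close> \<open>j \<in> G\<close> by (intro norm_diff_le_twice)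
  then show "norm (mu k - mu m) \<le> 4 * V"
    using norm_diff_triangle_le[OF _ j_close] by fastforce
  show "norm (mu m - g) \<le> 3 * V"
    using norm_diff_triangle_le[of "mu m" "mu j" "2 * V" g V] j_close honest_close[OF \<open>j \<in> G\<close>]
    by (simp add: norm_minus_commute)
qed

theorem lemma6:
  fixes D :: "'xi pmf"
    and sgrad :: "'a::real_normed_vector \<Rightarrow> 'xi \<Rightarrow> 'a"
    and grad :: "'a \<Rightarrow> 'a"
    and V :: real and K :: nat and G :: "nat set" and \<alpha> :: real
    and B :: "nat \<Rightarrow> nat" and xt :: "nat \<Rightarrow> 'a"
    and \<xi> :: "nat \<Rightarrow> nat \<Rightarrow> nat \<Rightarrow> 'xi"
    and \<mu> :: "nat \<Rightarrow> nat \<Rightarrow> 'a"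
    and t :: nat
  assumes bounded_var: "\<And>x s. s \<in> set_pmf D \<Longrightarrow> norm (sgrad x s - grad x) \<le> V"
    and alpha: "0 \<le> \<alpha>" "\<alpha> < 1/2"
    and G_sub: "G \<subseteq> {..<K}"
    and G_card: "real (card G) \<ge> (1 - \<alpha>) * real K"
    and t_pos: "t \<ge> 1"
    and batch: "\<And>t. B t \<ge> 1"
    and samples: "\<And>t i k. k \<in> G \<Longrightarrow> \<xi> t i k \<in> set_pmf D"
    and honest: "\<And>t k. k \<in> G \<Longrightarrow>
        \<mu> t k = (1 / real (B t)) *\<^sub>R (\<Sum>i\<in>{1..B t}. sgrad (xt (t - 1)) (\<xi> t i k))"
  shows "\<forall>k\<in>G.
     norm (\<mu> t k - grad (xt (t - 1))) \<le> V
   \<and> (\<exists>m. is_med_node (\<mu> t) K V m)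
   \<and> (\<forall>m. is_med_node (\<mu> t) K V m \<longrightarrow>
          norm (\<mu> t k - \<mu> t m) \<le> 4 * V \<and> norm (\<mu> t m - grad (xt (t - 1))) \<le> 3 * V)"
proof
  fix k assume "k \<in> G"
  have honest_close: "norm (\<mu> t j - grad (xt (t - 1))) \<le> V" if "j \<in> G" for j
    using norm_average_diff_le[of "{1..B t}" "\<lambda>i. sgrad (xt (t - 1)) (\<xi> t i j)"]
      honest[OF that] bounded_var[OF samples[OF that]] batch[of t]
    by simp
  have "K > 0"
    using \<open>k \<in> G\<close> G_sub by auto
  then have "(1 - \<alpha>) * real K > real K / 2"
    using alpha by simp
  then have majority: "real (card G) > real K / 2"
    using G_card by linarith
  show "norm (\<mu> t k - grad (xt (t - 1))) \<le> V
   \<and> (\<exists>m. is_med_node (\<mu> t) K V m)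
   \<and> (\<forall>m. is_med_node (\<mu> t) K V m \<longrightarrow>
          norm (\<mu> t k - \<mu> t m) \<le> 4 * V \<and> norm (\<mu> t m - grad (xt (t - 1))) \<le> 3 * V)"
    using honest_close[OF \<open>k \<in> G\<close>]
      is_med_node_if_honest[where mu = "\<mu> t", OF G_sub majority honest_close \<open>k \<in> G\<close>]
      is_med_node_close_to_honest[where mu = "\<mu> t", OF G_sub majority honest_close \<open>k \<in> G\<close>]
    by blast
qed

end
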